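(* Assume $S^t(\mu,\nu)>0$ and let $X$ be $F^t$ conditioned on $F^t_{t+1}=r$. Then $$D(X_0\|F^t_0)+D(X_{-1}\mid X_0\,\|\,B^t_{-1}\mid B^t_0)\ \ge\ -\log\|\mu\|_2^2,$$ $$D(X_t\|B^t_t)+D(X_{t+1}\mid X_t\,\|\,F^t_{t+1}\mid F^t_t)\ \ge\ -\log\|\nu\|_2^2 .$$
   Context: $\Omega$ is a finite set, $S$ a symmetric substochastic matrix on $\Omega$ with nonnegative entries, $u,v$ nonnegative vectors with $\|u\|_2=\|v\|_2=1$, $\mu=u/\|u\|_1$, $\nu=v/\|v\|_1$, $t$ a positive integer, $S^t(\mu,\nu)=\sum_{x,y}\mu(x)S^t(x,y)\nu(y)$. Let $\Omega_\circ=\Omega\cup\{r\}$, $r\notin\Omega$, fix $z_0\in\Omega$. $F^t$ is the sub-probability walk on $\Omega_\circ$ at times $-1,\ldots,t+1$ with $\Pr[F^t=w]=\mu(w_0)\prod_{i=1}^tS(w_{i-1},w_i)\,c(w)$ for $w_{-1}=r$, $w_0,\ldots,w_t\in\Omega$, where $c(w)=\nu(w_t)$ if $w_{t+1}=r$, $1-\nu(w_t)$ if $w_{t+1}=z_0$, 0 otherwise. $B^t$ has $\Pr[B^t=w]=\nu(w_t)\prod_{i=1}^tS(w_i,w_{i-1})\,c'(w)$ for $w_{t+1}=r$, $w_0,\ldots,w_t\in\Omega$, with $c'(w)=\mu(w_0)$ if $w_{-1}=r$, $1-\mu(w_0)$ if $w_{-1}=z_0$, 0 otherwise. $X$ has $\Pr[X=w]=\Pr[F^t=w]/S^t(\mu,\nu)$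 for $w_{t+1}=r$. Divergence $D(p\|q)=\sum_xp(x)\log\frac{p(x)}{q(x)}$ (terms with $p(x)=0$ are 0, log base 2), applied to distribution functions of random variables; conditional divergence $D(A_1\mid A_2\,\|\,B_1\mid B_2)=\sum_a\Pr[A_2=a]\,D(\operatorname{dist}(A_1\mid A_2=a)\,\|\,\operatorname{dist}(B_1\mid B_2=a))$ with $\operatorname{dist}(B_1\mid B_2=a)(b)=\Pr[B_1=b,B_2=a]/\Pr[B_2=a]$. *)

theory Defs
  imports "HOL-Analysis.Analysis"
begin

(* Omega is the finite type 'a; Omega_o = 'a option, with r = None.
   A walk at times -1..t+1 is a list w of length t+3 with w!(i+1) = w_i. *)

fun mpow :: "('a::finite \<Rightarrow> 'a \<Rightarrow> real) \<Rightarrow> nat \<Rightarrow> 'a \<Rightarrow> 'a \<Rightarrow> real" where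
  "mpow S 0 x y = (if x = y then 1 else 0)"
| "mpow S (Suc n) x y = (\<Sum>z\<in>UNIV. mpow S n x z * S z y)"

definition bilin :: "('a::finite \<Rightarrow> 'a \<Rightarrow> real) \<Rightarrow> ('a \<Rightarrow> real) \<Rightarrow> ('a \<Rightarrow> real) \<Rightarrow> real" where
  "bilin M mu nu = (\<Sum>x\<in>UNIV. \<Sum>y\<in>UNIV. mu x * M x y * nu y)"

definition walks :: "nat \<Rightarrow> ('a::finite) option list set" where
  "walks t = {w. length w = t + 3}"

definition Fdist :: "('a::finite \<Rightarrow> 'a \<Rightarrow> real) \<Rightarrow> ('a \<Rightarrow> real) \<Rightarrow> ('a \<Rightarrow> real) \<Rightarrow> 'a \<Rightarrow> nat
     \<Rightarrow> 'a option list \<Rightarrow> real" where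
  "Fdist S mu nu z0 t w =
     (if length w = t + 3 \<and> w ! 0 = None \<and> (\<forall>i\<in>{1..t+1}. w ! i \<noteq> None) then
        mu (the (w ! 1)) * (\<Prod>i\<in>{1..t}. S (the (w ! i)) (the (w ! (i+1)))) *
        (if w ! (t+2) = None then nu (the (w ! (t+1)))
         else if w ! (t+2) = Some z0 then 1 - nu (the (w ! (t+1))) else 0)
      else 0)"

definition Bdist :: "('a::finite \<Rightarrow> 'a \<Rightarrow> real) \<Rightarrow> ('a \<Rightarrow> real) \<Rightarrow> ('a \<Rightarrow> real) \<Rightarrow> 'a \<Rightarrow> nat
     \<Rightarrow> 'a option list \<Rightarrow> real" where
  "Bdist S mu nu z0 t w =
     (if length w = t + 3 \<and> w ! (t+2) = None \<and> (\<forall>i\<in>{1..t+1}. w ! i \<noteq> None) then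
        nu (the (w ! (t+1))) * (\<Prod>i\<in>{1..t}. S (the (w ! (i+1))) (the (w ! i))) *
        (if w ! 0 = None then mu (the (w ! 1))
         else if w ! 0 = Some z0 then 1 - mu (the (w ! 1)) else 0)
      else 0)"

definition Xdist :: "('a::finite \<Rightarrow> 'a \<Rightarrow> real) \<Rightarrow> ('a \<Rightarrow> real) \<Rightarrow> ('a \<Rightarrow> real) \<Rightarrow> 'a \<Rightarrow> nat
     \<Rightarrow> 'a option list \<Rightarrow> real" where
  "Xdist S mu nu z0 t w =
     (if length w = t + 3 \<and> w ! (t+2) = None
      then Fdist S mu nu z0 t w / bilin (mpow S t) mu nu else 0)"

(* distribution of the coordinate at list position k (= time k-1) *)
definition marg :: "('a::finite option list \<Rightarrow> real) \<Rightarrow> nat \<Rightarrow> nat \<Rightarrow> 'a option \<Rightarrow> real" where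
  "marg P t k a = (\<Sum>w\<in>walks t. if w ! k = a then P w else 0)"

definition joint :: "('a::finite option list \<Rightarrow> real) \<Rightarrow> nat \<Rightarrow> nat \<Rightarrow> nat
     \<Rightarrow> 'a option \<Rightarrow> 'a option \<Rightarrow> real" where
  "joint P t j k b a = (\<Sum>w\<in>walks t. if w ! j = b \<and> w ! k = a then P w else 0)"

definition KL :: "('b::finite \<Rightarrow> real) \<Rightarrow> ('b \<Rightarrow> real) \<Rightarrow> ereal" where
  "KL p q = (if \<exists>x. p x > 0 \<and> q x = 0 then \<infinity>
             else ereal (\<Sum>x\<in>UNIV. if p x = 0 then 0 else p x * log 2 (p x / q x)))"

(* D(A_j | A_k || B_j | B_k) where A ~ P, B ~ Q, coordinates at list positions j, k *)
definition condKL :: "('a::finite option list \<Rightarrow> real) \<Rightarrow> ('a option list \<Rightarrow> real) \<Rightarrow> nat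
     \<Rightarrow> nat \<Rightarrow> nat \<Rightarrow> ereal" where
  "condKL P Q t j k = (\<Sum>a\<in>UNIV. ereal (marg P t k a) *
      KL (\<lambda>b. joint P t j k b a / marg P t k a) (\<lambda>b. joint Q t j k b a / marg Q t k a))"

end

theory Submission
  imports Defs
begin

(*
  Conditioning F^t on F^t_{t+1} = r gives X_0 the law p(x) = mu(x) (S^t nu)(x) / S^t(mu,nu),
  while F^t_0 has law q(x) = mu(x) (S^t 1)(x). Given X_0, the walk X is at the root at time -1
  surely, whereas given B^t_0 = x the backward walk is there with probability mu(x). So the
  left-hand side equals sum_x p(x) log (p(x) / (q(x) mu(x))), and Jensen's inequality for log
  bounds it below by -log sum_x q(x) mu(x) >= -log sum_x mu(x)^2, because the row sums of S^t
  are at most 1. At the other end the roles of (mu, F^t) and (nu, B^t) are exchanged; there the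
  column sums of S^t are needed, which are at most 1 because S is symmetric.
*)

lemma sum_UNIV_option:
  fixes f :: "'b::finite option \<Rightarrow> 'c::comm_monoid_add"
  shows "(\<Sum>x\<in>UNIV. f x) = f None + (\<Sum>a\<in>UNIV. f (Some a))"
  by (simp add: UNIV_option_conv sum.reindex)

lemma sum_if_constant_cond: "(\<Sum>x\<in>A. if P then f x else 0) = (if P then \<Sum>x\<in>A. f x else 0)"
  by simp

section \<open>Walks whose interior lies in \<Omega>\<close>

definition walk_of :: "'a option \<Rightarrow> 'a list \<Rightarrow> 'a option \<Rightarrow> 'a option list" where
  "walk_of b ys c = b # map Some ys @ [c]"

definition interior_defined :: "nat \<Rightarrow> 'a option list \<Rightarrow> bool" where
  "interior_defined t w \<longleftrightarrow> (\<forall>i\<in>{1..t+1}. w ! i \<noteq> None)"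

lemma length_walk_of [simp]: "length (walk_of b ys c) = length ys + 2"
  by (simp add: walk_of_def)

lemma walk_of_nth_0 [simp]: "walk_of b ys c ! 0 = b"
  by (simp add: walk_of_def)

lemma walk_of_nth_Suc [simp]: "i < length ys \<Longrightarrow> walk_of b ys c ! Suc i = Some (ys ! i)"
  by (simp add: walk_of_def nth_append)

lemma walk_of_nth_last [simp]: "walk_of b ys c ! Suc (length ys) = c"
  by (simp add: walk_of_def nth_append)

lemma walk_of_nth_Suc_Suc_t [simp]: "length ys = t + 1 \<Longrightarrow> walk_of b ys c ! Suc (Suc t) = c"
  using walk_of_nth_last[of b ys c] by simp

lemma inj_walk_of: "inj (\<lambda>(b, ys, c). walk_of b ys c)"
  by (auto simp: inj_def walk_of_def inj_map_eq_map)

lemma interior_defined_walk_of: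
  assumes "length ys = t + 1"
  shows "interior_defined t (walk_of b ys c)"
  unfolding interior_defined_def
proof
  fix i assume "i \<in> {1..t+1}"
  then obtain j where "i = Suc j" "j < length ys"
    using assms by (cases i) auto
  then show "walk_of b ys c ! i \<noteq> None" by simp
qed

lemma walk_of_interior:
  assumes "length w = t + 3" and "interior_defined t w"
  shows "w = walk_of (w ! 0) (map (\<lambda>i. the (w ! Suc i)) [0..<t+1]) (w ! (t + 2))"
proof (rule nth_equalityI)
  fix i assume "i < length w"
  then consider "i = 0" | j where "i = Suc j" "j < t + 1" | "i = t + 2"
    using assms(1) by (cases i) (auto, linarith)
  then show "w ! i = walk_of (w ! 0) (map (\<lambda>i. the (w ! Suc i)) [0..<t+1]) (w ! (t + 2)) ! i"
  proof cases
    case (2 j)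
    then have "w ! Suc j \<noteq> None"
      using assms(2) by (auto simp: interior_defined_def)
    with 2 show ?thesis by (auto simp del: upt_Suc)
  qed simp_all
qed (use assms in simp)

lemma sum_walks_walk_of:
  fixes h :: "'a::finite option list \<Rightarrow> real"
  assumes "\<And>w. h w \<noteq> 0 \<Longrightarrow> interior_defined t w"
  shows "(\<Sum>w\<in>walks t. h w)
       = (\<Sum>b\<in>UNIV. \<Sum>ys | length ys = t + 1. \<Sum>c\<in>UNIV. h (walk_of b ys c))"
proof -
  let ?L = "{ys::'a list. length ys = t + 1}"
  let ?W = "(\<lambda>(b, ys, c). walk_of b ys c) ` (UNIV \<times> ?L \<times> UNIV)"
  have "finite (walks t :: 'a option list set)"
    unfolding walks_def using finite_lists_length_eq[of "UNIV::'a option set"] by simp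
  moreover have "?W \<subseteq> walks t"
    by (auto simp: walks_def)
  moreover have "h w = 0" if "w \<in> walks t - ?W" for w
  proof (rule ccontr)
    assume "h w \<noteq> 0"
    then have "w = walk_of (w ! 0) (map (\<lambda>i. the (w ! Suc i)) [0..<t+1]) (w ! (t + 2))"
      using that assms by (intro walk_of_interior) (auto simp: walks_def)
    then have "w \<in> ?W" by force
    with that show False by blast
  qed
  ultimately have "(\<Sum>w\<in>walks t. h w) = (\<Sum>w\<in>?W. h w)"
    by (intro sum.mono_neutral_right) auto
  also have "\<dots> = (\<Sum>(b, ys, c)\<in>UNIV \<times> ?L \<times> UNIV. h (walk_of b ys c))"
    by (subst sum.reindex) (auto intro: inj_on_subset[OF inj_walk_of] simp: case_prod_beta)
  also have "\<dots> = (\<Sum>b\<in>UNIV. \<Sum>ys\<in>?L. \<Sum>c\<in>UNIV. h (walk_of b ys c))"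
    by (simp add: sum.cartesian_product)
  finally show ?thesis .
qed

section \<open>Path weights and powers of \<open>S\<close>\<close>

definition path_weight :: "('a \<Rightarrow> 'a \<Rightarrow> real) \<Rightarrow> nat \<Rightarrow> 'a list \<Rightarrow> real" where
  "path_weight S n ys = (\<Prod>i<n. S (ys ! i) (ys ! Suc i))"

lemma path_weight_snoc:
  "length ys = Suc n \<Longrightarrow> path_weight S (Suc n) (ys @ [y]) = path_weight S n ys * S (ys ! n) y"
  by (simp add: path_weight_def nth_append)

lemma lists_length_Suc_snoc:
  "{ys::'a list. length ys = Suc n} = (\<lambda>(ys, y). ys @ [y]) ` ({ys. length ys = n} \<times> UNIV)"
proof -
  have "zs \<in> (\<lambda>(ys, y). ys @ [y]) ` ({ys. length ys = n} \<times> UNIV)"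
    if "length zs = Suc n" for zs :: "'a list"
    using that by (intro image_eqI[of _ _ "(butlast zs, last zs)"])
      (auto intro: append_butlast_last_id[symmetric])
  then show ?thesis by auto
qed

lemma sum_paths_eq_bilin:
  fixes S :: "'a::finite \<Rightarrow> 'a \<Rightarrow> real"
  shows "(\<Sum>ys | length ys = Suc n. f (ys ! 0) * path_weight S n ys * g (ys ! n)) = bilin (mpow S n) f g"
proof (induction n arbitrary: g)
  case 0
  have "{ys::'a list. length ys = Suc 0} = (\<lambda>y. [y]) ` UNIV"
    by (auto simp: length_Suc_conv)
  moreover have "(\<Sum>y\<in>UNIV. f x * mpow S 0 x y * g y) = f x * g x" for x
    by (simp add: if_distrib if_distribR cong: if_cong)
  ultimately show ?case
    by (simp add: sum.reindex inj_def path_weight_def bilin_def)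
next
  case (Suc n)
  let ?Sg = "\<lambda>z. \<Sum>y\<in>UNIV. S z y * g y"
  have "(\<Sum>ys | length ys = Suc (Suc n). f (ys ! 0) * path_weight S (Suc n) ys * g (ys ! Suc n))
      = (\<Sum>(ys, y)\<in>{ys::'a list. length ys = Suc n} \<times> UNIV.
           f (ys ! 0) * path_weight S n ys * (S (ys ! n) y * g y))"
    unfolding lists_length_Suc_snoc[of "Suc n"]
    by (subst sum.reindex) (auto simp: inj_on_def nth_append path_weight_snoc intro!: sum.cong)
  also have "\<dots> = (\<Sum>ys | length ys = Suc n. f (ys ! 0) * path_weight S n ys * ?Sg (ys ! n))"
    by (simp add: sum.cartesian_product[symmetric] sum_distrib_left)
  also have "\<dots> = bilin (mpow S n) f ?Sg"
    by (rule Suc.IH)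
  also have "\<dots> = (\<Sum>x\<in>UNIV. \<Sum>z\<in>UNIV. \<Sum>y\<in>UNIV. f x * mpow S n x z * S z y * g y)"
    by (simp add: bilin_def sum_distrib_left mult.assoc)
  also have "\<dots> = (\<Sum>x\<in>UNIV. \<Sum>y\<in>UNIV. \<Sum>z\<in>UNIV. f x * mpow S n x z * S z y * g y)"
    by (rule sum.cong[OF refl], rule sum.swap)
  also have "\<dots> = bilin (mpow S (Suc n)) f g"
    by (simp add: bilin_def sum_distrib_left sum_distrib_right mult.assoc)
  finally show ?case .
qed

lemma mpow_nonneg: "(\<And>x y. S x y \<ge> 0) \<Longrightarrow> mpow S n x y \<ge> 0"
  by (induction n arbitrary: y) (auto intro!: sum_nonneg)

lemma mpow_row_sum_le_1:
  assumes S_nonneg: "\<And>x y. S x y \<ge> 0" and S_sub: "\<And>x. (\<Sum>y\<in>UNIV. S x y) \<le> 1"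
  shows "(\<Sum>y\<in>UNIV. mpow S n x y) \<le> 1"
proof (induction n)
  case (Suc n)
  have "(\<Sum>y\<in>UNIV. mpow S (Suc n) x y) = (\<Sum>z\<in>UNIV. mpow S n x z * (\<Sum>y\<in>UNIV. S z y))"
    by (simp add: sum_distrib_left) (rule sum.swap)
  also have "\<dots> \<le> (\<Sum>z\<in>UNIV. mpow S n x z)"
    by (intro sum_mono mult_left_le S_sub mpow_nonneg S_nonneg)
  finally show ?case using Suc by simp
qed simp

lemma mpow_col_sum_le_1:
  assumes S_nonneg: "\<And>x y. S x y \<ge> 0" and S_sub: "\<And>x. (\<Sum>y\<in>UNIV. S x y) \<le> 1"
    and S_sym: "\<And>x y. S x y = S y x"
  shows "(\<Sum>x\<in>UNIV. mpow S n x y) \<le> 1"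
proof (induction n arbitrary: y)
  case (Suc n)
  have "(\<Sum>x\<in>UNIV. mpow S (Suc n) x y) = (\<Sum>z\<in>UNIV. (\<Sum>x\<in>UNIV. mpow S n x z) * S z y)"
    by (simp add: sum_distrib_right) (rule sum.swap)
  also have "\<dots> \<le> (\<Sum>z\<in>UNIV. S z y)"
    by (intro sum_mono mult_left_le_one_le S_nonneg Suc.IH sum_nonneg mpow_nonneg)
  also have "\<dots> = (\<Sum>z\<in>UNIV. S y z)"
    using S_sym by simp
  finally show ?case using S_sub[of y] by simp
qed simp

lemma sum_paths_start:
  fixes S :: "'a::finite \<Rightarrow> 'a \<Rightarrow> real"
  shows "(\<Sum>ys | length ys = t + 1. if ys ! 0 = a then f (ys ! 0) * path_weight S t ys * g (ys ! t) else 0)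
       = f a * (\<Sum>y\<in>UNIV. mpow S t a y * g y)"
proof -
  have "(\<Sum>ys | length ys = t + 1. if ys ! 0 = a then f (ys ! 0) * path_weight S t ys * g (ys ! t) else 0)
      = bilin (mpow S t) (\<lambda>x. if x = a then f x else 0) g"
    by (subst sum_paths_eq_bilin[symmetric]) (auto intro: sum.cong)
  also have "\<dots> = f a * (\<Sum>y\<in>UNIV. mpow S t a y * g y)"
    by (simp add: bilin_def if_distrib if_distribR sum_distrib_left mult.assoc sum_if_constant_cond
        cong: if_cong)
  finally show ?thesis .
qed

lemma sum_paths_end:
  fixes S :: "'a::finite \<Rightarrow> 'a \<Rightarrow> real"
  shows "(\<Sum>ys | length ys = t + 1. if ys ! t = a then f (ys ! 0) * path_weight S t ys * g (ys ! t) else 0)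
       = (\<Sum>x\<in>UNIV. f x * mpow S t x a) * g a"
proof -
  have "(\<Sum>ys | length ys = t + 1. if ys ! t = a then f (ys ! 0) * path_weight S t ys * g (ys ! t) else 0)
      = bilin (mpow S t) f (\<lambda>y. if y = a then g y else 0)"
    by (subst sum_paths_eq_bilin[symmetric]) (auto intro: sum.cong)
  also have "\<dots> = (\<Sum>x\<in>UNIV. f x * mpow S t x a) * g a"
    by (simp add: bilin_def if_distrib if_distribR sum_distrib_right cong: if_cong)
  finally show ?thesis .
qed

section \<open>Relative entropy\<close>

lemma log_sum_inequality:
  fixes p g :: "'b::finite \<Rightarrow> real"
  assumes p_nonneg: "\<And>x. p x \<ge> 0" and p_sum: "(\<Sum>x\<in>UNIV. p x) = 1"
    and g_pos: "\<And>x. p x > 0 \<Longrightarrow> g x > 0"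
    and g_sum: "(\<Sum>x | p x > 0. g x) \<le> M"
  shows "- log 2 M \<le> (\<Sum>x\<in>UNIV. if p x = 0 then 0 else p x * log 2 (p x / g x))"
proof -
  define A where "A = {x. p x > 0}"
  have p_cases: "p x = 0 \<longleftrightarrow> x \<notin> A" for x
    using p_nonneg[of x] by (auto simp: A_def)
  have "(\<Sum>x\<in>A. p x) = 1"
    using p_sum by (subst sum.mono_neutral_left) (auto simp: p_cases)
  then have "A \<noteq> {}" by auto
  have "(\<Sum>x\<in>A. p x * ln (g x / p x)) \<le> ln (\<Sum>x\<in>A. p x *\<^sub>R (g x / p x))"
    by (rule concave_on_sum[OF _ \<open>A \<noteq> {}\<close> ln_concave \<open>(\<Sum>x\<in>A. p x) = 1\<close>])
      (auto simp: A_def g_pos)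
  also have "(\<Sum>x\<in>A. p x *\<^sub>R (g x / p x)) = (\<Sum>x\<in>A. g x)"
    by (intro sum.cong) (auto simp: A_def)
  also have "ln (\<Sum>x\<in>A. g x) \<le> ln M"
  proof -
    have "0 < (\<Sum>x\<in>A. g x)"
      using \<open>A \<noteq> {}\<close> by (intro sum_pos) (auto simp: A_def g_pos)
    with g_sum show ?thesis by (simp add: A_def)
  qed
  moreover have "(\<Sum>x\<in>A. p x * ln (p x / g x)) = - (\<Sum>x\<in>A. p x * ln (g x / p x))"
    unfolding sum_negf[symmetric] by (intro sum.cong) (auto simp: A_def g_pos ln_div algebra_simps)
  ultimately have ln_bound: "- ln M \<le> (\<Sum>x\<in>A. p x * ln (p x / g x))"
    by linarith
  have "- log 2 M \<le> (\<Sum>x\<in>A. p x * log 2 (p x / g x))"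
    using divide_right_mono[OF ln_bound, of "ln 2"] by (simp add: log_def sum_divide_distrib)
  also have "\<dots> = (\<Sum>x\<in>UNIV. if p x = 0 then 0 else p x * log 2 (p x / g x))"
    by (simp add: p_cases sum.If_cases Compl_eq)
  finally show ?thesis .
qed

lemma KL_eq_sum:
  assumes "\<And>x. p x > 0 \<Longrightarrow> q x > 0"
  shows "KL p q = ereal (\<Sum>x\<in>UNIV. if p x = 0 then 0 else p x * log 2 (p x / q x))"
  using assms by (force simp: KL_def)

lemma KL_point_mass:
  fixes q :: "'b::finite \<Rightarrow> real"
  assumes "q x > 0"
  shows "KL (\<lambda>y. if y = x then 1 else 0) q = ereal (- log 2 (q x))"
proof -
  have "(\<Sum>y\<in>UNIV. if y = x then log 2 (1 / q y) else 0) = - log 2 (q x)"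
    using assms by (simp add: log_divide)
  with assms show ?thesis
    by (subst KL_eq_sum) (auto simp: if_distrib if_distribR split: if_splits cong: if_cong)
qed

lemma condKL_point_mass:
  fixes P Q :: "'a::finite option list \<Rightarrow> real"
  assumes P_point: "\<And>a b. joint P t j k b a = (if b = None then marg P t k a else 0)"
    and P_nonneg: "\<And>a. marg P t k a \<ge> 0"
    and Q_cond: "\<And>a. marg P t k a > 0 \<Longrightarrow> joint Q t j k None a / marg Q t k a = w a \<and> w a > 0"
  shows "condKL P Q t j k
       = ereal (\<Sum>a\<in>UNIV. if marg P t k a = 0 then 0 else - marg P t k a * log 2 (w a))"
  unfolding condKL_def sum_ereal[symmetric]
proof (rule sum.cong[OF refl])
  fix a
  show "ereal (marg P t k a) *
      KL (\<lambda>b. joint P t j k b a / marg P t k a) (\<lambda>b. joint Q t j k b a / marg Q t k a)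
      = ereal (if marg P t k a = 0 then 0 else - marg P t k a * log 2 (w a))"
  proof (cases "marg P t k a = 0")
    case False
    then have "marg P t k a > 0"
      using P_nonneg[of a] by simp
    moreover have "(\<lambda>b. joint P t j k b a / marg P t k a) = (\<lambda>b. if b = None then 1 else 0)"
      using False by (auto simp: P_point)
    ultimately show ?thesis
      using Q_cond False by (simp add: KL_point_mass)
  qed (simp add: zero_ereal_def[symmetric])
qed

lemma KL_add_condKL_point_mass:
  fixes P Q Q' :: "'a::finite option list \<Rightarrow> real"
  assumes P_point: "\<And>a b. joint P t j k b a = (if b = None then marg P t k a else 0)"
    and P_nonneg: "\<And>a. marg P t k a \<ge> 0"
    and Q_Q'_cond: "\<And>a. marg P t k a > 0 \<Longrightarrow>
           marg Q t k a > 0 \<and> w a > 0 \<and> joint Q' t j k None a / marg Q' t k a = w a"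
  shows "KL (marg P t k) (marg Q t k) + condKL P Q' t j k
       = ereal (\<Sum>a\<in>UNIV. if marg P t k a = 0 then 0
                 else marg P t k a * log 2 (marg P t k a / (marg Q t k a * w a)))"
proof -
  let ?p = "marg P t k" and ?q = "marg Q t k"
  have pos: "?p a > 0" if "?p a \<noteq> 0" for a
    using that P_nonneg[of a] by simp
  have "KL ?p ?q = ereal (\<Sum>a\<in>UNIV. if ?p a = 0 then 0 else ?p a * log 2 (?p a / ?q a))"
    using Q_Q'_cond by (intro KL_eq_sum) blast
  moreover have "condKL P Q' t j k = ereal (\<Sum>a\<in>UNIV. if ?p a = 0 then 0 else - ?p a * log 2 (w a))"
    using Q_Q'_cond by (intro condKL_point_mass P_point P_nonneg) blast
  moreover have "?p a * log 2 (?p a / ?q a) - ?p a * log 2 (w a) = ?p a * log 2 (?p a / (?q a * w a))"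
    if "?p a \<noteq> 0" for a
    using pos[OF that] Q_Q'_cond[OF pos[OF that]] by (simp add: log_divide log_mult algebra_simps)
  ultimately show ?thesis
    by (simp add: sum.distrib[symmetric] if_distrib cong: if_cong)
qed

lemma divergence_bound:
  fixes P Q Q' :: "'a::finite option list \<Rightarrow> real" and m r s :: "'a \<Rightarrow> real"
  assumes P_Some: "\<And>a. marg P t k (Some a) = m a * r a / Z" and P_None: "marg P t k None = 0"
    and Q_Some: "\<And>a. marg Q t k (Some a) = m a * s a"
    and P_point: "\<And>a b. joint P t j k b a = (if b = None then marg P t k a else 0)"
    and Q'_cond: "\<And>a. m a > 0 \<Longrightarrow> r a > 0 \<Longrightarrow>
                    joint Q' t j k None (Some a) / marg Q' t k (Some a) = m a"
    and m_nonneg: "\<And>a. m a \<ge> 0" and r_nonneg: "\<And>a. r a \<ge> 0"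
    and r_le_s: "\<And>a. r a \<le> s a" and s_le_1: "\<And>a. s a \<le> 1"
    and Z_eq: "(\<Sum>a\<in>UNIV. m a * r a) = Z" and Z_pos: "Z > 0"
  shows "ereal (- log 2 (\<Sum>a\<in>UNIV. (m a)\<^sup>2)) \<le> KL (marg P t k) (marg Q t k) + condKL P Q' t j k"
proof -
  let ?p = "marg P t k" and ?q = "marg Q t k"
  define w where "w x = (case x of None \<Rightarrow> 1 | Some a \<Rightarrow> m a)" for x
  have p_nonneg: "?p x \<ge> 0" for x
    by (cases x) (auto simp: P_Some P_None m_nonneg r_nonneg Z_pos less_imp_le)
  have support: "\<exists>a. x = Some a \<and> m a > 0 \<and> r a > 0" if "?p x > 0" for x
  proof (cases x)
    case (Some a)
    with that Z_pos have "m a * r a > 0"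
      by (simp add: P_Some zero_less_divide_iff)
    with Some m_nonneg[of a] r_nonneg[of a] show ?thesis
      by (simp add: zero_less_mult_iff)
  qed (use that P_None in simp)
  have q_w_pos: "?q x > 0 \<and> w x > 0 \<and> joint Q' t j k None x / marg Q' t k x = w x"
    if "?p x > 0" for x
    using support[OF that] r_le_s order.strict_trans2 by (fastforce simp: Q_Some w_def Q'_cond)
  have "(\<Sum>x\<in>UNIV. ?p x) = 1"
    using Z_eq Z_pos by (simp add: sum_UNIV_option P_None P_Some sum_divide_distrib[symmetric])
  moreover have "(\<Sum>x | ?p x > 0. ?q x * w x) \<le> (\<Sum>a\<in>UNIV. (m a)\<^sup>2)"
  proof -
    have "(\<Sum>x | ?p x > 0. ?q x * w x) \<le> (\<Sum>x\<in>Some ` UNIV. ?q x * w x)"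
      using support m_nonneg order.trans[OF r_nonneg r_le_s]
      by (intro sum_mono2) (auto simp: Q_Some w_def)
    also have "\<dots> \<le> (\<Sum>a\<in>UNIV. (m a)\<^sup>2)"
      by (auto simp: sum.reindex Q_Some w_def power2_eq_square m_nonneg s_le_1
          intro!: sum_mono mult_right_mono mult_left_le)
    finally show ?thesis .
  qed
  ultimately have "- log 2 (\<Sum>a\<in>UNIV. (m a)\<^sup>2)
      \<le> (\<Sum>x\<in>UNIV. if ?p x = 0 then 0 else ?p x * log 2 (?p x / (?q x * w x)))"
    using q_w_pos p_nonneg by (intro log_sum_inequality) auto
  also have "ereal \<dots> = KL ?p ?q + condKL P Q' t j k"
    using q_w_pos by (intro KL_add_condKL_point_mass[symmetric] P_point p_nonneg) blast
  finally show ?thesis by simp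
qed

section \<open>Laws of the walks near their endpoints\<close>

lemma prod_walk_of_eq_path_weight:
  assumes "length ys = t + 1"
  shows "(\<Prod>i\<in>{1..t}. S (the (walk_of b ys c ! i)) (the (walk_of b ys c ! (i + 1)))) = path_weight S t ys"
  using assms by (simp add: prod.atLeast1_atMost_eq path_weight_def)

lemma Fdist_walk_of:
  assumes "length ys = t + 1"
  shows "Fdist S mu nu z0 t (walk_of b ys c)
       = (if b = None then mu (ys ! 0) * path_weight S t ys *
            (if c = None then nu (ys ! t) else if c = Some z0 then 1 - nu (ys ! t) else 0)
          else 0)"
  using assms interior_defined_walk_of[OF assms] prod_walk_of_eq_path_weight[OF assms]
  by (simp add: Fdist_def interior_defined_def)

lemma Bdist_walk_of:
  assumes "length ys = t + 1" and S_sym: "\<And>x y. S x y = S y x"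
  shows "Bdist S mu nu z0 t (walk_of b ys c)
       = (if c = None then nu (ys ! t) * path_weight S t ys *
            (if b = None then mu (ys ! 0) else if b = Some z0 then 1 - mu (ys ! 0) else 0)
          else 0)"
proof -
  have weight: "(\<Prod>i\<in>{1..t}. S (the (walk_of b ys c ! (i + 1))) (the (walk_of b ys c ! i)))
      = path_weight S t ys"
    using prod_walk_of_eq_path_weight[OF assms(1)] S_sym by simp
  show ?thesis
    unfolding Bdist_def weight
    using assms(1) interior_defined_walk_of[OF assms(1)] by (simp add: interior_defined_def)
qed

lemma Xdist_walk_of:
  assumes "length ys = t + 1"
  shows "Xdist S mu nu z0 t (walk_of b ys c)
       = (if b = None \<and> c = None
          then mu (ys ! 0) * path_weight S t ys * nu (ys ! t) / bilin (mpow S t) mu nu else 0)"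
  using assms by (simp add: Xdist_def Fdist_walk_of)

lemma Fdist_interior_defined: "Fdist S mu nu z0 t w \<noteq> 0 \<Longrightarrow> interior_defined t w"
  by (auto simp: Fdist_def interior_defined_def split: if_splits)

lemma Bdist_interior_defined: "Bdist S mu nu z0 t w \<noteq> 0 \<Longrightarrow> interior_defined t w"
  by (auto simp: Bdist_def interior_defined_def split: if_splits)

lemma Xdist_interior_defined: "Xdist S mu nu z0 t w \<noteq> 0 \<Longrightarrow> interior_defined t w"
  by (auto simp: Xdist_def dest: Fdist_interior_defined split: if_splits)

lemma Xdist_start_root: "Xdist S mu nu z0 t w \<noteq> 0 \<Longrightarrow> w ! 0 = None"
  by (auto simp: Xdist_def Fdist_def split: if_splits)

lemma Xdist_end_root: "Xdist S mu nu z0 t w \<noteq> 0 \<Longrightarrow> w ! (t + 2) = None"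
  by (auto simp: Xdist_def split: if_splits)

lemma marg_interior_Some:
  fixes P :: "'a::finite option list \<Rightarrow> real"
  assumes P_interior: "\<And>w. P w \<noteq> 0 \<Longrightarrow> interior_defined t w" and "j \<le> t"
  shows "marg P t (Suc j) (Some a)
       = (\<Sum>ys | length ys = t + 1.
            if ys ! j = a then \<Sum>b\<in>UNIV. \<Sum>c\<in>UNIV. P (walk_of b ys c) else 0)"
proof -
  have "marg P t (Suc j) (Some a)
      = (\<Sum>b\<in>UNIV. \<Sum>ys | length ys = t + 1. \<Sum>c\<in>UNIV.
           if ys ! j = a then P (walk_of b ys c) else 0)"
    unfolding marg_def using \<open>j \<le> t\<close>
    by (subst sum_walks_walk_of) (auto dest: P_interior split: if_splits intro!: sum.cong)
  also have "\<dots> = (\<Sum>ys | length ys = t + 1. \<Sum>b\<in>UNIV. \<Sum>c\<in>UNIV.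
                       if ys ! j = a then P (walk_of b ys c) else 0)"
    by (rule sum.swap)
  finally show ?thesis
    by (simp add: sum_if_constant_cond)
qed

lemma marg_interior_None:
  fixes P :: "'a::finite option list \<Rightarrow> real"
  assumes P_interior: "\<And>w. P w \<noteq> 0 \<Longrightarrow> interior_defined t w" and "j \<le> t"
  shows "marg P t (Suc j) None = 0"
  unfolding marg_def using \<open>j \<le> t\<close>
  by (subst sum_walks_walk_of) (auto dest: P_interior split: if_splits intro!: sum.neutral)

lemma joint_start_interior:
  fixes P :: "'a::finite option list \<Rightarrow> real"
  assumes P_interior: "\<And>w. P w \<noteq> 0 \<Longrightarrow> interior_defined t w"
  shows "joint P t 0 1 b (Some a)
       = (\<Sum>ys | length ys = t + 1. if ys ! 0 = a then \<Sum>c\<in>UNIV. P (walk_of b ys c) else 0)"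
proof -
  have "joint P t 0 1 b (Some a)
      = (\<Sum>b'\<in>UNIV. \<Sum>ys | length ys = t + 1. \<Sum>c\<in>UNIV.
           if b' = b then if ys ! 0 = a then P (walk_of b' ys c) else 0 else 0)"
    unfolding joint_def
    by (subst sum_walks_walk_of) (auto dest: P_interior split: if_splits intro!: sum.cong)
  also have "\<dots> = (\<Sum>ys | length ys = t + 1. \<Sum>b'\<in>UNIV. \<Sum>c\<in>UNIV.
           if b' = b then if ys ! 0 = a then P (walk_of b' ys c) else 0 else 0)"
    by (rule sum.swap)
  finally show ?thesis
    by (simp add: sum_if_constant_cond)
qed

lemma joint_end_interior:
  fixes P :: "'a::finite option list \<Rightarrow> real"
  assumes P_interior: "\<And>w. P w \<noteq> 0 \<Longrightarrow> interior_defined t w"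
  shows "joint P t (t + 2) (t + 1) c (Some a)
       = (\<Sum>ys | length ys = t + 1. if ys ! t = a then \<Sum>b\<in>UNIV. P (walk_of b ys c) else 0)"
proof -
  have "joint P t (t + 2) (t + 1) c (Some a)
      = (\<Sum>b\<in>UNIV. \<Sum>ys | length ys = t + 1. \<Sum>c'\<in>UNIV.
           if c' = c then if ys ! t = a then P (walk_of b ys c') else 0 else 0)"
    unfolding joint_def
    by (subst sum_walks_walk_of) (auto dest: P_interior split: if_splits intro!: sum.cong)
  also have "\<dots> = (\<Sum>ys | length ys = t + 1. \<Sum>b\<in>UNIV. \<Sum>c'\<in>UNIV.
           if c' = c then if ys ! t = a then P (walk_of b ys c') else 0 else 0)"
    by (rule sum.swap)
  finally show ?thesis
    by (simp add: sum_if_constant_cond)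
qed

lemma joint_point_mass:
  assumes "\<And>w. P w \<noteq> 0 \<Longrightarrow> w ! j = None"
  shows "joint P t j k b a = (if b = None then marg P t k a else 0)"
  unfolding joint_def marg_def using assms
  by (cases b) (auto intro!: sum.cong sum.neutral, fastforce+)

lemma marg_start_Some:
  fixes P :: "'a::finite option list \<Rightarrow> real"
  assumes "\<And>w. P w \<noteq> 0 \<Longrightarrow> interior_defined t w"
    and "\<And>ys. length ys = t + 1 \<Longrightarrow>
           (\<Sum>b\<in>UNIV. \<Sum>c\<in>UNIV. P (walk_of b ys c)) = f (ys ! 0) * path_weight S t ys * g (ys ! t)"
  shows "marg P t 1 (Some a) = f a * (\<Sum>y\<in>UNIV. mpow S t a y * g y)"
  using marg_interior_Some[OF assms(1), where j = 0 and a = a] assms(2) sum_paths_start[of a f S t g]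
  by (simp cong: if_cong)

lemma marg_end_Some:
  fixes P :: "'a::finite option list \<Rightarrow> real"
  assumes "\<And>w. P w \<noteq> 0 \<Longrightarrow> interior_defined t w"
    and "\<And>ys. length ys = t + 1 \<Longrightarrow>
           (\<Sum>b\<in>UNIV. \<Sum>c\<in>UNIV. P (walk_of b ys c)) = f (ys ! 0) * path_weight S t ys * g (ys ! t)"
  shows "marg P t (t + 1) (Some a) = (\<Sum>x\<in>UNIV. f x * mpow S t x a) * g a"
  using marg_interior_Some[OF assms(1), where j = t and a = a] assms(2) sum_paths_end[of t a f S g]
  by (simp cong: if_cong)

lemma joint_start_Some:
  fixes P :: "'a::finite option list \<Rightarrow> real"
  assumes "\<And>w. P w \<noteq> 0 \<Longrightarrow> interior_defined t w"
    and "\<And>ys. length ys = t + 1 \<Longrightarrow>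
           (\<Sum>c\<in>UNIV. P (walk_of b ys c)) = f (ys ! 0) * path_weight S t ys * g (ys ! t)"
  shows "joint P t 0 1 b (Some a) = f a * (\<Sum>y\<in>UNIV. mpow S t a y * g y)"
  using joint_start_interior[OF assms(1), where b = b and a = a] assms(2) sum_paths_start[of a f S t g]
  by (simp cong: if_cong)

lemma joint_end_Some:
  fixes P :: "'a::finite option list \<Rightarrow> real"
  assumes "\<And>w. P w \<noteq> 0 \<Longrightarrow> interior_defined t w"
    and "\<And>ys. length ys = t + 1 \<Longrightarrow>
           (\<Sum>b\<in>UNIV. P (walk_of b ys c)) = f (ys ! 0) * path_weight S t ys * g (ys ! t)"
  shows "joint P t (t + 2) (t + 1) c (Some a) = (\<Sum>x\<in>UNIV. f x * mpow S t x a) * g a"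
  using joint_end_interior[OF assms(1), where c = c and a = a] assms(2) sum_paths_end[of t a f S g]
  by (simp cong: if_cong)

lemma marg_Xdist_start:
  "marg (Xdist S mu nu z0 t) t 1 (Some a) = mu a * (\<Sum>y\<in>UNIV. mpow S t a y * nu y) / bilin (mpow S t) mu nu"
  by (subst marg_start_Some[where f = "\<lambda>x. mu x / bilin (mpow S t) mu nu" and g = nu])
    (auto simp: Xdist_interior_defined Xdist_walk_of sum_UNIV_option)

lemma marg_Xdist_end:
  "marg (Xdist S mu nu z0 t) t (t + 1) (Some a) = nu a * (\<Sum>x\<in>UNIV. mu x * mpow S t x a) / bilin (mpow S t) mu nu"
  by (subst marg_end_Some[where f = "\<lambda>x. mu x / bilin (mpow S t) mu nu" and g = nu])
    (auto simp: Xdist_interior_defined Xdist_walk_of sum_UNIV_option sum_divide_distrib[symmetric])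

lemma marg_Fdist_start: "marg (Fdist S mu nu z0 t) t 1 (Some a) = mu a * (\<Sum>y\<in>UNIV. mpow S t a y)"
  by (subst marg_start_Some[where f = mu and g = "\<lambda>_. 1"])
    (auto simp: Fdist_interior_defined Fdist_walk_of sum_UNIV_option
        simp flip: sum_distrib_left distrib_left)

lemma marg_Fdist_end: "marg (Fdist S mu nu z0 t) t (t + 1) (Some a) = (\<Sum>x\<in>UNIV. mu x * mpow S t x a)"
  by (subst marg_end_Some[where f = mu and g = "\<lambda>_. 1"])
    (auto simp: Fdist_interior_defined Fdist_walk_of sum_UNIV_option
        simp flip: sum_distrib_left distrib_left)

lemma joint_Fdist_end_root:
  "joint (Fdist S mu nu z0 t) t (t + 2) (t + 1) None (Some a) = (\<Sum>x\<in>UNIV. mu x * mpow S t x a) * nu a"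
  by (subst joint_end_Some[where f = mu and g = nu])
    (auto simp: Fdist_interior_defined Fdist_walk_of sum_UNIV_option
        simp flip: sum_distrib_left distrib_left)

lemma marg_Bdist_start:
  assumes "\<And>x y. S x y = S y x"
  shows "marg (Bdist S mu nu z0 t) t 1 (Some a) = (\<Sum>y\<in>UNIV. mpow S t a y * nu y)"
  by (subst marg_start_Some[where f = "\<lambda>_. 1" and g = nu])
    (auto simp: Bdist_interior_defined Bdist_walk_of[OF _ assms] sum_UNIV_option
        simp flip: sum_distrib_left distrib_left)

lemma marg_Bdist_end:
  assumes "\<And>x y. S x y = S y x"
  shows "marg (Bdist S mu nu z0 t) t (t + 1) (Some a) = (\<Sum>x\<in>UNIV. mpow S t x a) * nu a"
  by (subst marg_end_Some[where f = "\<lambda>_. 1" and g = nu])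
    (auto simp: Bdist_interior_defined Bdist_walk_of[OF _ assms] sum_UNIV_option
        simp flip: sum_distrib_left distrib_left)

lemma joint_Bdist_start_root:
  assumes "\<And>x y. S x y = S y x"
  shows "joint (Bdist S mu nu z0 t) t 0 1 None (Some a) = mu a * (\<Sum>y\<in>UNIV. mpow S t a y * nu y)"
  by (subst joint_start_Some[where f = mu and g = nu])
    (auto simp: Bdist_interior_defined Bdist_walk_of[OF _ assms] sum_UNIV_option
        simp flip: sum_distrib_left distrib_left)

lemma start_divergence_bound:
  fixes S :: "'a::finite \<Rightarrow> 'a \<Rightarrow> real"
  assumes S_nonneg: "\<And>x y. S x y \<ge> 0" and S_sym: "\<And>x y. S x y = S y x"
    and S_sub: "\<And>x. (\<Sum>y\<in>UNIV. S x y) \<le> 1"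
    and mu_nonneg: "\<And>x. mu x \<ge> 0" and nu_nonneg: "\<And>x. nu x \<ge> 0" and nu_le_1: "\<And>x. nu x \<le> 1"
    and pos: "bilin (mpow S t) mu nu > 0"
  shows "ereal (- log 2 (\<Sum>x\<in>UNIV. (mu x)\<^sup>2))
    \<le> KL (marg (Xdist S mu nu z0 t) t 1) (marg (Fdist S mu nu z0 t) t 1)
       + condKL (Xdist S mu nu z0 t) (Bdist S mu nu z0 t) t 0 1"
proof (rule divergence_bound[where m = mu and r = "\<lambda>a. \<Sum>y\<in>UNIV. mpow S t a y * nu y"
      and s = "\<lambda>a. \<Sum>y\<in>UNIV. mpow S t a y" and Z = "bilin (mpow S t) mu nu"])
  show "marg (Xdist S mu nu z0 t) t 1 (Some a) = mu a * (\<Sum>y\<in>UNIV. mpow S t a y * nu y) / bilin (mpow S t) mu nu"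
    and "marg (Fdist S mu nu z0 t) t 1 (Some a) = mu a * (\<Sum>y\<in>UNIV. mpow S t a y)" for a
    by (rule marg_Xdist_start marg_Fdist_start)+
  show "joint (Bdist S mu nu z0 t) t 0 1 None (Some a) / marg (Bdist S mu nu z0 t) t 1 (Some a) = mu a"
    if "0 < (\<Sum>y\<in>UNIV. mpow S t a y * nu y)" for a
    using that joint_Bdist_start_root[where S = S, OF S_sym] marg_Bdist_start[where S = S, OF S_sym]
    by simp
  show "marg (Xdist S mu nu z0 t) t 1 None = 0"
    using marg_interior_None[where P = "Xdist S mu nu z0 t" and t = t and j = 0, OF Xdist_interior_defined]
    by simp
  show "\<And>a b. joint (Xdist S mu nu z0 t) t 0 1 b a
      = (if b = None then marg (Xdist S mu nu z0 t) t 1 a else 0)"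
    by (rule joint_point_mass) (rule Xdist_start_root)
  show "(\<Sum>y\<in>UNIV. mpow S t a y * nu y) \<le> (\<Sum>y\<in>UNIV. mpow S t a y)" for a
    by (intro sum_mono mult_left_le nu_le_1 mpow_nonneg S_nonneg)
  show "(\<Sum>y\<in>UNIV. mpow S t a y) \<le> 1" for a
    by (rule mpow_row_sum_le_1[OF S_nonneg S_sub])
  show "(\<Sum>y\<in>UNIV. mpow S t a y * nu y) \<ge> 0" for a
    by (intro sum_nonneg mult_nonneg_nonneg mpow_nonneg S_nonneg nu_nonneg)
  show "(\<Sum>a\<in>UNIV. mu a * (\<Sum>y\<in>UNIV. mpow S t a y * nu y)) = bilin (mpow S t) mu nu"
    by (simp add: bilin_def sum_distrib_left mult.assoc)
qed (simp_all add: mu_nonneg pos)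

lemma end_divergence_bound:
  fixes S :: "'a::finite \<Rightarrow> 'a \<Rightarrow> real"
  assumes S_nonneg: "\<And>x y. S x y \<ge> 0" and S_sym: "\<And>x y. S x y = S y x"
    and S_sub: "\<And>x. (\<Sum>y\<in>UNIV. S x y) \<le> 1"
    and mu_nonneg: "\<And>x. mu x \<ge> 0" and mu_le_1: "\<And>x. mu x \<le> 1" and nu_nonneg: "\<And>x. nu x \<ge> 0"
    and pos: "bilin (mpow S t) mu nu > 0"
  shows "ereal (- log 2 (\<Sum>x\<in>UNIV. (nu x)\<^sup>2))
    \<le> KL (marg (Xdist S mu nu z0 t) t (t + 1)) (marg (Bdist S mu nu z0 t) t (t + 1))
       + condKL (Xdist S mu nu z0 t) (Fdist S mu nu z0 t) t (t + 2) (t + 1)"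
proof (rule divergence_bound[where m = nu and r = "\<lambda>a. \<Sum>x\<in>UNIV. mu x * mpow S t x a"
      and s = "\<lambda>a. \<Sum>x\<in>UNIV. mpow S t x a" and Z = "bilin (mpow S t) mu nu"])
  show "marg (Xdist S mu nu z0 t) t (t + 1) (Some a)
      = nu a * (\<Sum>x\<in>UNIV. mu x * mpow S t x a) / bilin (mpow S t) mu nu" for a
    by (rule marg_Xdist_end)
  show "marg (Bdist S mu nu z0 t) t (t + 1) (Some a) = nu a * (\<Sum>x\<in>UNIV. mpow S t x a)" for a
    using marg_Bdist_end[where S = S, OF S_sym] by (simp add: mult.commute)
  show "joint (Fdist S mu nu z0 t) t (t + 2) (t + 1) None (Some a)
      / marg (Fdist S mu nu z0 t) t (t + 1) (Some a) = nu a" if "0 < (\<Sum>x\<in>UNIV. mu x * mpow S t x a)" for a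
    using that joint_Fdist_end_root[where S = S and t = t and a = a]
      marg_Fdist_end[where S = S and t = t and a = a]
    by simp
  show "marg (Xdist S mu nu z0 t) t (t + 1) None = 0"
    using marg_interior_None[where P = "Xdist S mu nu z0 t" and t = t and j = t, OF Xdist_interior_defined]
    by simp
  show "\<And>a b. joint (Xdist S mu nu z0 t) t (t + 2) (t + 1) b a
      = (if b = None then marg (Xdist S mu nu z0 t) t (t + 1) a else 0)"
    by (rule joint_point_mass) (rule Xdist_end_root)
  show "(\<Sum>x\<in>UNIV. mu x * mpow S t x a) \<le> (\<Sum>x\<in>UNIV. mpow S t x a)" for a
    by (intro sum_mono mult_left_le_one_le mu_le_1 mu_nonneg mpow_nonneg S_nonneg)
  show "(\<Sum>x\<in>UNIV. mpow S t x a) \<le> 1" for a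
    by (rule mpow_col_sum_le_1[OF S_nonneg S_sub S_sym])
  show "(\<Sum>x\<in>UNIV. mu x * mpow S t x a) \<ge> 0" for a
    by (intro sum_nonneg mult_nonneg_nonneg mpow_nonneg S_nonneg mu_nonneg)
  show "(\<Sum>a\<in>UNIV. nu a * (\<Sum>x\<in>UNIV. mu x * mpow S t x a)) = bilin (mpow S t) mu nu"
    unfolding bilin_def
    by (subst sum.swap) (simp add: sum_distrib_left sum_distrib_right mult_ac)
qed (simp_all add: nu_nonneg pos)

lemma l1_normalized_bounds:
  fixes f :: "'b::finite \<Rightarrow> real"
  assumes "\<And>x. f x \<ge> 0"
  shows "0 \<le> f x / (\<Sum>y\<in>UNIV. \<bar>f y\<bar>)" and "f x / (\<Sum>y\<in>UNIV. \<bar>f y\<bar>) \<le> 1"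
proof -
  have "f x \<le> (\<Sum>y\<in>UNIV. \<bar>f y\<bar>)"
    using member_le_sum[of x UNIV "\<lambda>y. \<bar>f y\<bar>"] assms[of x] by simp
  then show "f x / (\<Sum>y\<in>UNIV. \<bar>f y\<bar>) \<le> 1"
    by (simp add: divide_le_eq_1 sum_nonneg order_less_le)
  show "0 \<le> f x / (\<Sum>y\<in>UNIV. \<bar>f y\<bar>)"
    using assms by (simp add: sum_nonneg)
qed

theorem lemma3p6:
  fixes S :: "'a::finite \<Rightarrow> 'a \<Rightarrow> real" and u v :: "'a \<Rightarrow> real"
    and z0 :: 'a and t :: nat
  assumes S_nonneg: "\<And>x y. S x y \<ge> 0"
    and S_sym: "\<And>x y. S x y = S y x"
    and S_sub: "\<And>x. (\<Sum>y\<in>UNIV. S x y) \<le> 1"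
    and u_nonneg: "\<And>x. u x \<ge> 0" and v_nonneg: "\<And>x. v x \<ge> 0"
    and u_norm: "sqrt (\<Sum>x\<in>UNIV. (u x)\<^sup>2) = 1"
    and v_norm: "sqrt (\<Sum>x\<in>UNIV. (v x)\<^sup>2) = 1"
    and t_pos: "t > 0"
  defines "mu \<equiv> (\<lambda>x. u x / (\<Sum>y\<in>UNIV. \<bar>u y\<bar>))"
    and "nu \<equiv> (\<lambda>x. v x / (\<Sum>y\<in>UNIV. \<bar>v y\<bar>))"
  assumes pos: "bilin (mpow S t) mu nu > 0"
  shows "(KL (marg (Xdist S mu nu z0 t) t 1) (marg (Fdist S mu nu z0 t) t 1)
           + condKL (Xdist S mu nu z0 t) (Bdist S mu nu z0 t) t 0 1
         \<ge> ereal (- log 2 (\<Sum>x\<in>UNIV. (mu x)\<^sup>2))) \<and>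
         (KL (marg (Xdist S mu nu z0 t) t (t+1)) (marg (Bdist S mu nu z0 t) t (t+1))
           + condKL (Xdist S mu nu z0 t) (Fdist S mu nu z0 t) t (t+2) (t+1)
         \<ge> ereal (- log 2 (\<Sum>x\<in>UNIV. (nu x)\<^sup>2)))"
proof -
  have mu_nonneg: "\<And>x. mu x \<ge> 0" and mu_le_1: "\<And>x. mu x \<le> 1"
    unfolding mu_def using l1_normalized_bounds[where f = u, OF u_nonneg] by auto
  have nu_nonneg: "\<And>x. nu x \<ge> 0" and nu_le_1: "\<And>x. nu x \<le> 1"
    unfolding nu_def using l1_normalized_bounds[where f = v, OF v_nonneg] by auto
  show ?thesis
    using start_divergence_bound[OF S_nonneg S_sym S_sub mu_nonneg nu_nonneg nu_le_1 pos]
      end_divergence_bound[OF S_nonneg S_sym S_sub mu_nonneg mu_le_1 nu_nonneg pos]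
    by simp
qed

end
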